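(* Let $p_\tau(\mathbf x)=\sum_{k=1}^K w_k\mathcal N(\mathbf x;\boldsymbol\mu_k,\sigma_\tau^2I_d)$ with $w_k>0$, $\sum w_k=1$, and let $\mathbf J(\mathbf x,\tau)=\nabla\nabla\log p_\tau(\mathbf x)$ be the score Jacobian. Let $\bar{\mathbf x}=\sum_kw_k\boldsymbol\mu_k$, $\boldsymbol\nu_k=\boldsymbol\mu_k-\bar{\mathbf x}$, $\mathbf W=\sum_kw_k\boldsymbol\nu_k\boldsymbol\nu_k^\top$, $\mathbf Q=\sum_kw_k|\boldsymbol\nu_k|^2\boldsymbol\nu_k\boldsymbol\nu_k^\top$ and $\langle d^2\rangle=\sum_kw_k|\boldsymbol\nu_k|^2$. Then as $\sigma_\tau^2\to\infty$, $$\mathbf J(\bar{\mathbf x},\tau)=-\frac{I}{\sigma_\tau^2}+\frac{\mathbf W}{\sigma_\tau^4}+\frac{\langle d^2\rangle\mathbf W-\mathbf Q}{2\sigma_\tau^6}+O(\sigma_\tau^{-8}).$$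
   Context: $\mathcal N(\mathbf x;\boldsymbol\mu,\Sigma)$ is the Gaussian density; $\mathbf W$ is the between-class covariance and $\mathbf Q$ the distance-weighted covariance. *)

theory Defs
  imports "HOL-Analysis.Analysis"
begin

(* Isotropic Gaussian density N(x; mu, s I_d) on R^d, d = CARD('d), s = sigma^2 > 0 *)
definition gauss_iso :: "real ^ 'd \<Rightarrow> real ^ 'd \<Rightarrow> real \<Rightarrow> real" where
  "gauss_iso x mu s = (2 * pi * s) powr (- real CARD('d) / 2) * exp (- (norm (x - mu))\<^sup>2 / (2 * s))"

definition gmix :: "('k::finite \<Rightarrow> real) \<Rightarrow> ('k \<Rightarrow> real ^ 'd) \<Rightarrow> real \<Rightarrow> real ^ 'd \<Rightarrow> real" where
  "gmix w mu s x = (\<Sum>k\<in>UNIV. w k * gauss_iso x (mu k) s)"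

definition grad :: "(real ^ 'd \<Rightarrow> real) \<Rightarrow> real ^ 'd \<Rightarrow> real ^ 'd" where
  "grad f x = (\<chi> i. frechet_derivative f (at x) (axis i 1))"

definition hessian :: "(real ^ 'd \<Rightarrow> real) \<Rightarrow> real ^ 'd \<Rightarrow> real ^ 'd ^ 'd" where
  "hessian f x = (\<chi> i j. frechet_derivative (\<lambda>y. grad f y $ i) (at x) (axis j 1))"

definition outer :: "real ^ 'd \<Rightarrow> real ^ 'd \<Rightarrow> real ^ 'd ^ 'd" where
  "outer u v = (\<chi> i j. u $ i * v $ j)"

end

(* The score Jacobian of a Gaussian mixture is -I/s + C(x)/s^2, where C(x) is the covariance of
   the offsets x - mu_k under the posterior weights proportional to w_k exp(-|x - mu_k|^2/(2s));
   the normalising constant (2 pi s)^(-d/2) does not depend on x and drops out of the Hessian of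
   the logarithm. At the centroid these weights are w_k exp(-|nu_k|^2/(2s)), and expanding the
   exponentials to first order in 1/s gives C = W + (<d^2> W - Q)/(2s) + O(1/s^2): the first
   moment sum_k w_k nu_k vanishes, so the squared mean enters only at order 1/s^2, and the
   <d^2> W term comes from normalising by the total mass 1 - <d^2>/(2s) + O(1/s^2). Dividing by
   s^2 gives the expansion entrywise, and hence in norm. *)

theory Submission
  imports Defs "HOL-Real_Asymp.Real_Asymp"
begin

section \<open>The Hessian of the log-density\<close>

lemma outer_nth: "outer u v $ i = u $ i *\<^sub>R v"
  by (simp add: outer_def vec_eq_iff)

lemma mat_1_nth: "mat 1 $ i = axis i 1"
  by (simp add: mat_def axis_def vec_eq_iff)

lemma grad_eqI:
  assumes "(f has_derivative (\<lambda>h. v \<bullet> h)) (at x)"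
  shows "grad f x = v"
  by (simp add: grad_def frechet_derivative_at[OF assms, symmetric] vec_eq_iff inner_axis)

lemma hessian_eqI:
  assumes "\<And>i. ((\<lambda>y. grad f y $ i) has_derivative (\<lambda>h. H $ i \<bullet> h)) (at x)"
  shows "hessian f x = H"
  by (simp add: hessian_def frechet_derivative_at[OF assms, symmetric] vec_eq_iff inner_axis)

definition gauss_kernel :: "real \<Rightarrow> real ^ 'd \<Rightarrow> real ^ 'd \<Rightarrow> real" where
  "gauss_kernel s m x = exp (- (norm (x - m))\<^sup>2 / (2 * s))"

definition kernel_sum ::
    "('k::finite \<Rightarrow> real) \<Rightarrow> ('k \<Rightarrow> real ^ 'd) \<Rightarrow> real \<Rightarrow> real ^ 'd \<Rightarrow> real" where
  "kernel_sum w mu s x = (\<Sum>k\<in>UNIV. w k * gauss_kernel s (mu k) x)"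

definition kernel_moment1 ::
    "('k::finite \<Rightarrow> real) \<Rightarrow> ('k \<Rightarrow> real ^ 'd) \<Rightarrow> real \<Rightarrow> real ^ 'd \<Rightarrow> real ^ 'd" where
  "kernel_moment1 w mu s x = (\<Sum>k\<in>UNIV. (w k * gauss_kernel s (mu k) x) *\<^sub>R (x - mu k))"

definition kernel_moment2 ::
    "('k::finite \<Rightarrow> real) \<Rightarrow> ('k \<Rightarrow> real ^ 'd) \<Rightarrow> real \<Rightarrow> real ^ 'd \<Rightarrow> real ^ 'd ^ 'd" where
  "kernel_moment2 w mu s x =
     (\<Sum>k\<in>UNIV. (w k * gauss_kernel s (mu k) x) *\<^sub>R outer (x - mu k) (x - mu k))"

lemma gmix_eq_kernel_sum:
  "gmix w mu s x = (2 * pi * s) powr (- real CARD('d) / 2) * kernel_sum w mu s (x :: real ^ 'd)"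
  by (simp add: gmix_def gauss_iso_def kernel_sum_def gauss_kernel_def sum_distrib_left mult_ac)

lemma kernel_sum_pos:
  assumes "\<And>k. w k > 0"
  shows "kernel_sum w mu s x > 0"
  unfolding kernel_sum_def gauss_kernel_def by (rule sum_pos) (simp_all add: assms)

lemma has_derivative_gauss_kernel:
  assumes "s \<noteq> 0"
  shows "(gauss_kernel s m has_derivative
           (\<lambda>h. - (gauss_kernel s m y / s) * (h \<bullet> (y - m)))) (at y)"
  unfolding gauss_kernel_def[abs_def] power2_norm_eq_inner
  by (rule derivative_eq_intros refl)+ (use assms in \<open>auto simp: inner_commute field_simps\<close>)

lemma has_derivative_kernel_sum:
  assumes "s \<noteq> 0"
  shows "(kernel_sum w mu s has_derivative (\<lambda>h. - (h \<bullet> kernel_moment1 w mu s y) / s)) (at y)"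
proof -
  have "(kernel_sum w mu s has_derivative
      (\<lambda>h. \<Sum>k\<in>UNIV. w k * (- (gauss_kernel s (mu k) y / s) * (h \<bullet> (y - mu k))))) (at y)"
    unfolding kernel_sum_def[abs_def]
    by (intro has_derivative_sum has_derivative_mult_right has_derivative_gauss_kernel assms)
  then show ?thesis
    by (rule has_derivative_eq_rhs)
       (simp add: fun_eq_iff kernel_moment1_def inner_sum_right sum_divide_distrib sum_negf
         mult_ac)
qed

lemma has_derivative_kernel_moment1_nth:
  assumes "s \<noteq> 0"
  shows "((\<lambda>x. kernel_moment1 w mu s x $ i) has_derivative
     (\<lambda>h. kernel_sum w mu s y * h $ i - (kernel_moment2 w mu s y $ i \<bullet> h) / s)) (at y)"
proof -
  have "(\<lambda>x. kernel_moment1 w mu s x $ i) =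
      (\<lambda>x. \<Sum>k\<in>UNIV. w k * (gauss_kernel s (mu k) x * (x $ i - mu k $ i)))"
    by (simp add: fun_eq_iff kernel_moment1_def mult_ac)
  moreover have
    "((\<lambda>x. \<Sum>k\<in>UNIV. w k * (gauss_kernel s (mu k) x * (x $ i - mu k $ i))) has_derivative
      (\<lambda>h. \<Sum>k\<in>UNIV. w k * (gauss_kernel s (mu k) y * (h $ i - 0)
          + - (gauss_kernel s (mu k) y / s) * (h \<bullet> (y - mu k)) * (y $ i - mu k $ i)))) (at y)"
    by (intro has_derivative_sum has_derivative_mult_right has_derivative_mult
        has_derivative_gauss_kernel assms has_derivative_diff has_derivative_const
        bounded_linear.has_derivative[OF bounded_linear_vec_nth] has_derivative_ident)
  moreover have "(\<Sum>k\<in>UNIV. w k * (gauss_kernel s (mu k) y * (h $ i - 0)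
          + - (gauss_kernel s (mu k) y / s) * (h \<bullet> (y - mu k)) * (y $ i - mu k $ i)))
      = kernel_sum w mu s y * h $ i - (kernel_moment2 w mu s y $ i \<bullet> h) / s" for h
  proof -
    have row: "kernel_moment2 w mu s y $ i =
        (\<Sum>k\<in>UNIV. (w k * gauss_kernel s (mu k) y * (y - mu k) $ i) *\<^sub>R (y - mu k))"
      by (simp add: kernel_moment2_def outer_def vec_eq_iff mult_ac)
    show ?thesis
      unfolding row kernel_sum_def inner_sum_left sum_distrib_right sum_divide_distrib
        sum_subtractf[symmetric]
      by (intro sum.cong)
         (simp_all add: inner_commute add_divide_distrib diff_divide_distrib algebra_simps)
  qed
  ultimately show ?thesis
    by (simp add: has_derivative_eq_rhs fun_eq_iff)
qed

lemma grad_ln_gmix: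
  fixes y :: "real ^ 'd"
  assumes wpos: "\<And>k. w k > 0" and s: "s > 0"
  shows "grad (\<lambda>x. ln (gmix w mu s x)) y =
    - (1 / (s * kernel_sum w mu s y)) *\<^sub>R kernel_moment1 w mu s y"
proof (rule grad_eqI)
  define c :: real where "c = (2 * pi * s) powr (- real CARD('d) / 2)"
  have c: "c > 0" using s by (simp add: c_def)
  have "(\<lambda>x. ln (gmix w mu s x)) = (\<lambda>x. ln c + ln (kernel_sum w mu s x))"
    unfolding gmix_eq_kernel_sum c_def[symmetric] by (intro ext ln_mult_pos c kernel_sum_pos wpos)
  moreover have "((\<lambda>x. ln c + ln (kernel_sum w mu s x)) has_derivative
      (\<lambda>h. 0 + - (h \<bullet> kernel_moment1 w mu s y) / s * inverse (kernel_sum w mu s y))) (at y)"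
    using s by (intro has_derivative_add has_derivative_const has_derivative_ln
        has_derivative_kernel_sum kernel_sum_pos wpos) simp_all
  ultimately show "((\<lambda>x. ln (gmix w mu s x)) has_derivative
      (\<lambda>h. (- (1 / (s * kernel_sum w mu s y)) *\<^sub>R kernel_moment1 w mu s y) \<bullet> h)) (at y)"
    by (simp add: has_derivative_eq_rhs fun_eq_iff inner_commute field_simps)
qed

lemma hessian_ln_gmix:
  fixes y :: "real ^ 'd"
  assumes wpos: "\<And>k. w k > 0" and s: "s > 0"
  shows "hessian (\<lambda>x. ln (gmix w mu s x)) y =
    - (1 / s) *\<^sub>R mat 1 + (1 / (s * kernel_sum w mu s y)\<^sup>2) *\<^sub>R
      (kernel_sum w mu s y *\<^sub>R kernel_moment2 w mu s y
       - outer (kernel_moment1 w mu s y) (kernel_moment1 w mu s y))"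
proof (rule hessian_eqI)
  fix i
  let ?Z = "kernel_sum w mu s" and ?M1 = "kernel_moment1 w mu s" and ?M2 = "kernel_moment2 w mu s"
  let ?H = "- (1 / s) *\<^sub>R mat 1
    + (1 / (s * ?Z y)\<^sup>2) *\<^sub>R (?Z y *\<^sub>R ?M2 y - outer (?M1 y) (?M1 y))"
  have Z: "?Z y > 0" by (rule kernel_sum_pos[OF wpos])
  have "(\<lambda>x. grad (\<lambda>x. ln (gmix w mu s x)) x $ i) = (\<lambda>x. - (?M1 x $ i / (s * ?Z x)))"
    by (simp add: fun_eq_iff grad_ln_gmix[OF wpos s])
  moreover have "((\<lambda>x. - (?M1 x $ i / (s * ?Z x))) has_derivative
      (\<lambda>h. - (((?Z y * h $ i - (?M2 y $ i \<bullet> h) / s) * (s * ?Z y)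
                  - ?M1 y $ i * (s * (- (h \<bullet> ?M1 y) / s)))
                 / ((s * ?Z y) * (s * ?Z y))))) (at y)"
    using s Z by (intro has_derivative_minus has_derivative_divide' has_derivative_mult_right
        has_derivative_kernel_moment1_nth has_derivative_kernel_sum) simp_all
  moreover have "?H $ i \<bullet> h
      = - h $ i / s + (?Z y * (?M2 y $ i \<bullet> h) - ?M1 y $ i * (?M1 y \<bullet> h)) / (s * ?Z y)\<^sup>2" for h
    by (simp add: outer_nth mat_1_nth inner_diff_left inner_add_left inner_axis'
        diff_divide_distrib)
  ultimately show "((\<lambda>x. grad (\<lambda>x. ln (gmix w mu s x)) x $ i) has_derivative
      (\<lambda>h. ?H $ i \<bullet> h)) (at y)"
    using s Z
    by (simp add: has_derivative_eq_rhs fun_eq_iff inner_commute field_simps power2_eq_square)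
qed

lemma hessian_ln_gmix_nth:
  fixes w :: "'k::finite \<Rightarrow> real" and mu :: "'k \<Rightarrow> real ^ 'd" and y :: "real ^ 'd"
  assumes wpos: "\<And>k. w k > 0" and s: "s > 0"
  defines "E \<equiv> \<lambda>k. w k * exp (- (norm (mu k - y))\<^sup>2 / (2 * s))"
  shows "hessian (\<lambda>x. ln (gmix w mu s x)) y $ i $ j = - (if i = j then 1 else 0) / s +
    ((\<Sum>k\<in>UNIV. E k * (mu k - y) $ i * (mu k - y) $ j) * (\<Sum>k\<in>UNIV. E k)
     - (\<Sum>k\<in>UNIV. E k * (mu k - y) $ i) * (\<Sum>k\<in>UNIV. E k * (mu k - y) $ j))
    / (\<Sum>k\<in>UNIV. E k)\<^sup>2 / s\<^sup>2"
proof -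
  have Z: "kernel_sum w mu s y = (\<Sum>k\<in>UNIV. E k)"
    by (simp add: kernel_sum_def gauss_kernel_def E_def norm_minus_commute)
  have M1: "kernel_moment1 w mu s y $ i = - (\<Sum>k\<in>UNIV. E k * (mu k - y) $ i)" for i
    by (simp add: kernel_moment1_def gauss_kernel_def E_def norm_minus_commute sum_negf[symmetric]
        algebra_simps)
  have M2: "kernel_moment2 w mu s y $ i $ j = (\<Sum>k\<in>UNIV. E k * (mu k - y) $ i * (mu k - y) $ j)"
    by (simp add: kernel_moment2_def gauss_kernel_def E_def norm_minus_commute outer_def
        algebra_simps)
  show ?thesis
    using s kernel_sum_pos[OF wpos, where mu = mu and s = s and x = y]
    by (simp add: hessian_ln_gmix[OF wpos s] Z M1 M2 outer_def mat_def field_simps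
        power2_eq_square)
qed

section \<open>Expansions in inverse powers of the variance\<close>

definition two_term_expansion :: "(real \<Rightarrow> real) \<Rightarrow> real \<Rightarrow> real \<Rightarrow> bool" where
  "two_term_expansion f a b \<longleftrightarrow> (\<lambda>s. f s - a - b / s) \<in> O(\<lambda>s. 1 / s\<^sup>2)"

lemma two_term_expansion_const: "two_term_expansion (\<lambda>_. c) c 0"
  by (simp add: two_term_expansion_def)

lemma two_term_expansion_affine: "two_term_expansion (\<lambda>s. a + b / s) a b"
  by (simp add: two_term_expansion_def)

lemma two_term_expansion_exp: "two_term_expansion (\<lambda>s. exp (- t / (2 * s))) 1 (- t / 2)"
  unfolding two_term_expansion_def by real_asymp

lemma two_term_expansion_tendsto:
  assumes "two_term_expansion f a b"
  shows "(f \<longlongrightarrow> a) at_top"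
proof -
  have "(\<lambda>s. f s - a - b / s) \<in> o(\<lambda>_. 1)"
    using assms unfolding two_term_expansion_def by (rule landau_o.big_small_trans) real_asymp
  then have "((\<lambda>s. f s - a - b / s) \<longlongrightarrow> 0) at_top"
    using smalloD_tendsto by fastforce
  moreover have "((\<lambda>s::real. a + b / s) \<longlongrightarrow> a) at_top"
    by real_asymp
  ultimately have "((\<lambda>s. (f s - a - b / s) + (a + b / s)) \<longlongrightarrow> 0 + a) at_top"
    by (rule tendsto_add)
  then show ?thesis by simp
qed

lemma two_term_expansion_bounded:
  assumes "two_term_expansion f a b"
  shows "f \<in> O(\<lambda>_. 1)"
  using two_term_expansion_tendsto[OF assms] by (intro bigoI_tendsto[of _ _ a]) simp_all

lemma two_term_expansion_add:
  assumes "two_term_expansion f a b" "two_term_expansion g c d"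
  shows "two_term_expansion (\<lambda>s. f s + g s) (a + c) (b + d)"
proof -
  have "(\<lambda>s. (f s - a - b / s) + (g s - c - d / s)) \<in> O(\<lambda>s. 1 / s\<^sup>2)"
    using assms unfolding two_term_expansion_def by (rule sum_in_bigo)
  then show ?thesis
    by (simp add: two_term_expansion_def add_divide_distrib algebra_simps)
qed

lemma two_term_expansion_diff:
  assumes "two_term_expansion f a b" "two_term_expansion g c d"
  shows "two_term_expansion (\<lambda>s. f s - g s) (a - c) (b - d)"
proof -
  have "(\<lambda>s. (f s - a - b / s) - (g s - c - d / s)) \<in> O(\<lambda>s. 1 / s\<^sup>2)"
    using assms unfolding two_term_expansion_def by (rule sum_in_bigo)
  then show ?thesis
    by (simp add: two_term_expansion_def diff_divide_distrib algebra_simps)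
qed

lemma two_term_expansion_mult:
  assumes f: "two_term_expansion f a b" and g: "two_term_expansion g c d"
  shows "two_term_expansion (\<lambda>s. f s * g s) (a * c) (a * d + b * c)"
proof -
  have "(\<lambda>s. (f s - a - b / s) * g s) \<in> O(\<lambda>s. 1 / s\<^sup>2)"
    using f two_term_expansion_bounded[OF g] unfolding two_term_expansion_def
    by (rule landau_o.big_1_mult)
  moreover have "(\<lambda>s. (g s - c - d / s) * (a + b / s)) \<in> O(\<lambda>s. 1 / s\<^sup>2)"
    using g two_term_expansion_bounded[OF two_term_expansion_affine]
    unfolding two_term_expansion_def
    by (rule landau_o.big_1_mult)
  moreover have "(\<lambda>s::real. b * d / s\<^sup>2) \<in> O(\<lambda>s. 1 / s\<^sup>2)"
    by real_asymp
  ultimately have "(\<lambda>s. (f s - a - b / s) * g s + ((g s - c - d / s) * (a + b / s) + b * d / s\<^sup>2))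
      \<in> O(\<lambda>s. 1 / s\<^sup>2)"
    by (intro sum_in_bigo)
  moreover have "(\<lambda>s. (f s - a - b / s) * g s + ((g s - c - d / s) * (a + b / s) + b * d / s\<^sup>2))
      = (\<lambda>s. f s * g s - a * c - (a * d + b * c) / s)"
    by (rule ext, rename_tac s, case_tac "s = 0") (simp_all add: field_simps power2_eq_square)
  ultimately show ?thesis
    unfolding two_term_expansion_def by simp
qed

lemma two_term_expansion_inverse:
  assumes g: "two_term_expansion g c d" and "c \<noteq> 0"
  shows "two_term_expansion (\<lambda>s. 1 / g s) (1 / c) (- d / c\<^sup>2)"
proof -
  define h where "h s = 1 / c + (- d / c\<^sup>2) / s" for s :: real
  have lim: "(g \<longlongrightarrow> c) at_top"
    by (rule two_term_expansion_tendsto[OF g])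
  have "two_term_expansion (\<lambda>s. g s * h s) (c * (1 / c)) (c * (- d / c\<^sup>2) + d * (1 / c))"
    unfolding h_def by (intro two_term_expansion_mult g two_term_expansion_affine)
  then have "(\<lambda>s. g s * h s - 1) \<in> O(\<lambda>s. 1 / s\<^sup>2)"
    using \<open>c \<noteq> 0\<close> by (simp add: two_term_expansion_def power2_eq_square)
  then have "(\<lambda>s. 1 - g s * h s) \<in> O(\<lambda>s. 1 / s\<^sup>2)"
    by (subst landau_o.big.uminus_in_iff[symmetric]) simp
  moreover have "((\<lambda>s. 1 / g s) \<longlongrightarrow> 1 / c) at_top"
    using lim \<open>c \<noteq> 0\<close> by (intro tendsto_divide tendsto_const)
  then have "(\<lambda>s. 1 / g s) \<in> O(\<lambda>_. 1)"
    by (intro bigoI_tendsto[where c = "1 / c"]) simp_all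
  ultimately have "(\<lambda>s. (1 - g s * h s) * (1 / g s)) \<in> O(\<lambda>s. 1 / s\<^sup>2)"
    by (rule landau_o.big_1_mult)
  moreover have "\<forall>\<^sub>F s in at_top. g s \<noteq> 0"
    by (rule tendsto_imp_eventually_ne[OF lim \<open>c \<noteq> 0\<close>])
  then have "\<forall>\<^sub>F s in at_top. (1 - g s * h s) * (1 / g s) = 1 / g s - 1 / c - (- d / c\<^sup>2) / s"
    by eventually_elim (simp add: h_def field_simps)
  ultimately show ?thesis
    unfolding two_term_expansion_def by (rule landau_o.big.in_cong[THEN iffD1, rotated])
qed

lemma two_term_expansion_sum:
  assumes "\<And>k. k \<in> A \<Longrightarrow> two_term_expansion (f k) (a k) (b k)"
  shows "two_term_expansion (\<lambda>s. \<Sum>k\<in>A. f k s) (\<Sum>k\<in>A. a k) (\<Sum>k\<in>A. b k)"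
  using assms
  by (induction A rule: infinite_finite_induct)
     (simp_all add: two_term_expansion_const two_term_expansion_add)

lemma two_term_expansion_exp_sum:
  "two_term_expansion (\<lambda>s. \<Sum>k\<in>A. c k * exp (- a k / (2 * s)))
     (\<Sum>k\<in>A. c k) (- (\<Sum>k\<in>A. c k * a k) / 2)"
proof -
  have "two_term_expansion (\<lambda>s. \<Sum>k\<in>A. c k * exp (- a k / (2 * s)))
      (\<Sum>k\<in>A. c k * 1) (\<Sum>k\<in>A. c k * (- a k / 2) + 0 * 1)"
    by (intro two_term_expansion_sum two_term_expansion_mult two_term_expansion_const
        two_term_expansion_exp)
  then show ?thesis
    by (simp add: sum_divide_distrib sum_negf)
qed

lemma two_term_expansion_remainder:
  assumes "two_term_expansion f a b"
  shows "(\<lambda>s. (f s - a - b / s) / s\<^sup>2) \<in> O(\<lambda>s. 1 / s ^ 4)"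
proof -
  have "(\<lambda>s. (f s - a - b / s) * (1 / s\<^sup>2)) \<in> O(\<lambda>s. 1 / s\<^sup>2 * (1 / s\<^sup>2))"
    using assms unfolding two_term_expansion_def by (rule landau_o.big.mult) simp
  then show ?thesis
    by (simp add: power2_eq_square power4_eq_xxxx mult.assoc)
qed

lemma tilted_covariance_expansion:
  fixes w a p q :: "'k \<Rightarrow> real" and A :: "'k set"
  assumes w1: "(\<Sum>k\<in>A. w k) = 1"
    and p0: "(\<Sum>k\<in>A. w k * p k) = 0" and q0: "(\<Sum>k\<in>A. w k * q k) = 0"
  defines "E \<equiv> \<lambda>s k. w k * exp (- a k / (2 * s))"
  shows "two_term_expansion
      (\<lambda>s. ((\<Sum>k\<in>A. E s k * p k * q k) * (\<Sum>k\<in>A. E s k)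
            - (\<Sum>k\<in>A. E s k * p k) * (\<Sum>k\<in>A. E s k * q k)) / (\<Sum>k\<in>A. E s k)\<^sup>2)
      (\<Sum>k\<in>A. w k * p k * q k)
      (((\<Sum>k\<in>A. w k * a k) * (\<Sum>k\<in>A. w k * p k * q k) - (\<Sum>k\<in>A. w k * a k * p k * q k)) / 2)"
    (is "two_term_expansion (\<lambda>s. (?S2 s * ?Z s - ?P s * ?Q s) / (?Z s)\<^sup>2) ?W ?B")
proof -
  have exp_sum: "two_term_expansion (\<lambda>s. \<Sum>k\<in>A. E s k * c k) (\<Sum>k\<in>A. w k * c k)
      (- (\<Sum>k\<in>A. w k * c k * a k) / 2)" for c
    using two_term_expansion_exp_sum[where c = "\<lambda>k. w k * c k" and A = A and a = a]
    by (simp add: E_def mult_ac)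
  have Z: "two_term_expansion ?Z 1 (- (\<Sum>k\<in>A. w k * a k) / 2)"
    using exp_sum[of "\<lambda>_. 1"] w1 by simp
  obtain bp bq where P: "two_term_expansion ?P 0 bp" and Q: "two_term_expansion ?Q 0 bq"
    using exp_sum[of p] exp_sum[of q] p0 q0 by auto
  have S2: "two_term_expansion ?S2 ?W (- (\<Sum>k\<in>A. w k * a k * p k * q k) / 2)"
    using exp_sum[of "\<lambda>k. p k * q k"] by (simp add: mult_ac)
  have Zinv: "two_term_expansion (\<lambda>s. 1 / ?Z s) 1 ((\<Sum>k\<in>A. w k * a k) / 2)"
    using two_term_expansion_inverse[OF Z] by simp
  have "two_term_expansion (\<lambda>s. ?S2 s * (1 / ?Z s) - ?P s * ?Q s * (1 / ?Z s) * (1 / ?Z s)) ?W ?B"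
    using two_term_expansion_diff[OF two_term_expansion_mult[OF S2 Zinv]
        two_term_expansion_mult[OF two_term_expansion_mult[OF
          two_term_expansion_mult[OF P Q] Zinv] Zinv]]
    by (simp add: algebra_simps diff_divide_distrib)
  moreover have "?S2 s * (1 / ?Z s) - ?P s * ?Q s * (1 / ?Z s) * (1 / ?Z s)
      = (?S2 s * ?Z s - ?P s * ?Q s) / (?Z s)\<^sup>2" for s
    by (cases "?Z s = 0") (simp_all add: field_simps power2_eq_square)
  ultimately show ?thesis by simp
qed

section \<open>The expansion at the centroid\<close>

lemma norm_le_sum_abs_entries:
  fixes M :: "real ^ 'n ^ 'm"
  shows "norm M \<le> (\<Sum>i\<in>UNIV. \<Sum>j\<in>UNIV. \<bar>M $ i $ j\<bar>)"
proof -
  have "norm M = L2_set (\<lambda>i. norm (M $ i)) UNIV" by (simp add: norm_vec_def)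
  also have "\<dots> \<le> (\<Sum>i\<in>UNIV. norm (M $ i))" by (rule L2_set_le_sum) simp
  also have "\<dots> \<le> (\<Sum>i\<in>UNIV. \<Sum>j\<in>UNIV. \<bar>M $ i $ j\<bar>)"
    by (rule sum_mono) (rule norm_le_l1_cart)
  finally show ?thesis .
qed

lemma bigo_norm_matrix:
  fixes M :: "'a \<Rightarrow> real ^ 'n ^ 'm" and g :: "'a \<Rightarrow> real"
  assumes "\<And>i j. (\<lambda>x. M x $ i $ j) \<in> O[F](g)"
  shows "(\<lambda>x. norm (M x)) \<in> O[F](g)"
proof -
  have "(\<lambda>x. norm (M x)) \<in> O[F](\<lambda>x. \<Sum>i\<in>UNIV. \<Sum>j\<in>UNIV. \<bar>M x $ i $ j\<bar>)"
    by (intro landau_o.big_mono always_eventually allI)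
       (simp add: norm_le_sum_abs_entries order.trans[OF _ abs_ge_self])
  also have "(\<lambda>x. \<Sum>i\<in>UNIV. \<Sum>j\<in>UNIV. \<bar>M x $ i $ j\<bar>) \<in> O[F](g)"
    using assms by (intro big_sum_in_bigo) simp
  finally show ?thesis .
qed

lemma bigo_inverse_power_imp_bound:
  fixes f :: "real \<Rightarrow> real"
  assumes "f \<in> O(\<lambda>s. 1 / s ^ n)"
  shows "\<exists>C S. \<forall>s\<ge>S. s > 0 \<and> norm (f s) \<le> C / s ^ n"
proof -
  obtain C where "\<forall>\<^sub>F s in at_top. norm (f s) \<le> C * norm (1 / s ^ n)"
    using assms by (elim landau_o.bigE)
  moreover have "\<forall>\<^sub>F s in at_top. s > (0::real)"
    by (rule eventually_gt_at_top)
  ultimately have "\<forall>\<^sub>F s in at_top. s > 0 \<and> norm (f s) \<le> C / s ^ n"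
    by eventually_elim simp
  then show ?thesis
    by (auto simp: eventually_at_top_linorder)
qed

lemma hessian_ln_gmix_centroid_nth:
  fixes w :: "'k::finite \<Rightarrow> real" and mu :: "'k \<Rightarrow> real ^ 'd" and i j :: 'd
  assumes wpos: "\<And>k. w k > 0" and wsum: "(\<Sum>k\<in>UNIV. w k) = 1"
  defines "xbar \<equiv> (\<Sum>k\<in>UNIV. w k *\<^sub>R mu k)"
  defines "nu \<equiv> (\<lambda>k. mu k - xbar)"
  defines "W \<equiv> (\<Sum>k\<in>UNIV. w k * nu k $ i * nu k $ j)"
  defines "Q \<equiv> (\<Sum>k\<in>UNIV. w k * (norm (nu k))\<^sup>2 * nu k $ i * nu k $ j)"
  defines "d2 \<equiv> (\<Sum>k\<in>UNIV. w k * (norm (nu k))\<^sup>2)"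
  shows "(\<lambda>s. hessian (\<lambda>x. ln (gmix w mu s x)) xbar $ i $ j
      - (- (if i = j then 1 else 0) / s + W / s\<^sup>2 + (d2 * W - Q) / (2 * s ^ 3)))
    \<in> O(\<lambda>s. 1 / s ^ 4)"
proof -
  have centered: "(\<Sum>k\<in>UNIV. w k * nu k $ l) = 0" for l
  proof -
    have "(\<Sum>k\<in>UNIV. w k * nu k $ l) = (\<Sum>k\<in>UNIV. w k * mu k $ l) - (\<Sum>k\<in>UNIV. w k) * xbar $ l"
      by (simp add: nu_def right_diff_distrib sum_subtractf sum_distrib_right[symmetric])
    then show ?thesis using wsum by (simp add: xbar_def)
  qed
  define E where "E = (\<lambda>s k. w k * exp (- (norm (nu k))\<^sup>2 / (2 * s)))"
  define R where "R = (\<lambda>s. ((\<Sum>k\<in>UNIV. E s k * nu k $ i * nu k $ j) * (\<Sum>k\<in>UNIV. E s k)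
    - (\<Sum>k\<in>UNIV. E s k * nu k $ i) * (\<Sum>k\<in>UNIV. E s k * nu k $ j)) / (\<Sum>k\<in>UNIV. E s k)\<^sup>2)"
  define B where "B = (d2 * W - Q) / 2"
  have "two_term_expansion R W B"
    using tilted_covariance_expansion[OF wsum centered centered, of "\<lambda>k. (norm (nu k))\<^sup>2"]
    by (simp add: R_def E_def B_def W_def Q_def d2_def mult_ac)
  then have "(\<lambda>s. (R s - W - B / s) / s\<^sup>2) \<in> O(\<lambda>s. 1 / s ^ 4)"
    by (rule two_term_expansion_remainder)
  moreover have "\<forall>\<^sub>F s in at_top. hessian (\<lambda>x. ln (gmix w mu s x)) xbar $ i $ j
      - (- (if i = j then 1 else 0) / s + W / s\<^sup>2 + (d2 * W - Q) / (2 * s ^ 3))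
      = (R s - W - B / s) / s\<^sup>2"
    using eventually_gt_at_top[of 0]
  proof eventually_elim
    case (elim s)
    have "mu k - xbar = nu k" for k by (simp add: nu_def)
    then have H_nth: "hessian (\<lambda>x. ln (gmix w mu s x)) xbar $ i $ j
        = - (if i = j then 1 else 0) / s + R s / s\<^sup>2"
      using hessian_ln_gmix_nth[OF wpos elim, where mu = mu and y = xbar and i = i and j = j]
      by (simp add: R_def E_def)
    show ?case
      using elim by (simp add: H_nth B_def field_simps power2_eq_square power3_eq_cube)
  qed
  ultimately show ?thesis
    using landau_o.big.in_cong by fastforce
qed

theorem mainTheorem19:
  fixes w :: "'k::finite \<Rightarrow> real" and mu :: "'k \<Rightarrow> real ^ 'd"
  assumes wpos: "\<And>k. w k > 0" and wsum: "(\<Sum>k\<in>UNIV. w k) = 1"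
  defines "xbar \<equiv> (\<Sum>k\<in>UNIV. w k *\<^sub>R mu k)"
  defines "nu \<equiv> (\<lambda>k. mu k - xbar)"
  defines "W \<equiv> (\<Sum>k\<in>UNIV. w k *\<^sub>R outer (nu k) (nu k))"
  defines "Q \<equiv> (\<Sum>k\<in>UNIV. (w k * (norm (nu k))\<^sup>2) *\<^sub>R outer (nu k) (nu k))"
  defines "d2 \<equiv> (\<Sum>k\<in>UNIV. w k * (norm (nu k))\<^sup>2)"
  defines "J \<equiv> (\<lambda>s::real. hessian (\<lambda>x. ln (gmix w mu s x)) xbar)"
  shows "\<exists>C S. \<forall>s\<ge>S. s > 0 \<and>
           norm (J s - ( - (1 / s) *\<^sub>R mat 1 + (1 / s ^ 2) *\<^sub>R W
                         + (1 / (2 * s ^ 3)) *\<^sub>R (d2 *\<^sub>R W - Q))) \<le> C / s ^ 4"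
proof -
  let ?M = "\<lambda>s. J s - ( - (1 / s) *\<^sub>R mat 1 + (1 / s ^ 2) *\<^sub>R W
                         + (1 / (2 * s ^ 3)) *\<^sub>R (d2 *\<^sub>R W - Q))"
  have "(\<lambda>s. ?M s $ i $ j) \<in> O(\<lambda>s. 1 / s ^ 4)" for i j
    using hessian_ln_gmix_centroid_nth[OF wpos wsum, where i = i and j = j]
    by (simp add: J_def W_def Q_def d2_def xbar_def nu_def outer_def mat_def mult_ac)
  then have "(\<lambda>s. norm (?M s)) \<in> O(\<lambda>s. 1 / s ^ 4)"
    by (rule bigo_norm_matrix)
  from bigo_inverse_power_imp_bound[OF this] show ?thesis
    by simp
qed

end
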